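(* For every integer $m\ge 2$, the ordered covering array number $OCAN(2,m,2,2)$ equals the smallest positive integer $N$ such that $m\le \binom{N-1}{\lfloor N/2\rfloor -1}$.
   Context: For positive integers $m,s$, the RT poset $[m\times s]$ is the set $\{1,\ldots,ms\}$ partitioned into $m$ blocks $B_i=\{is+1,\ldots,(i+1)s\}$ ($i=0,\ldots,m-1$); each block is a chain under the usual order of the integers, and elements of different blocks are incomparable. An anti-ideal is the complement of an ideal (a down-closed set). Given an $N\times n$ array over an alphabet $V$ of size $v$, a set of $t$ columns is covered if in the $N\times t$ subarray formed by those columns every $t$-tuple over $V$ appears as a row at least once. For positive integers with $2\le t\le ms$, an ordered covering array $OCA(N;t,m,s,v)$ is an $N\times ms$ array over an alphabet of size $v$ with columns labeled by the elements of $[m\times s]$ such that for every anti-ideal $J$ of size $t$ the set of columns labeled by $J$ is covered; $OCAN(t,m,s,v)$ is the smallest $N$ for which an $OCA(N;t,m,s,v)$ exists. *)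

theory Defs
  imports Main
begin

text \<open>The RT poset [m x s]: ground set {1..m*s}; element x lies in block (x-1) div s;
  x precedes y iff they lie in the same block and x <= y as integers.\<close>

definition rt_elems :: "nat \<Rightarrow> nat \<Rightarrow> nat set" where
  "rt_elems m s = {1..m*s}"

definition rt_le :: "nat \<Rightarrow> nat \<Rightarrow> nat \<Rightarrow> bool" where
  "rt_le s x y \<longleftrightarrow> (x - 1) div s = (y - 1) div s \<and> x \<le> y"

definition rt_ideal :: "nat \<Rightarrow> nat \<Rightarrow> nat set \<Rightarrow> bool" where
  "rt_ideal m s I \<longleftrightarrow> I \<subseteq> rt_elems m s \<and>
     (\<forall>x\<in>I. \<forall>y\<in>rt_elems m s. rt_le s y x \<longrightarrow> y \<in> I)"

definition rt_anti_ideal :: "nat \<Rightarrow> nat \<Rightarrow> nat set \<Rightarrow> bool" where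
  "rt_anti_ideal m s J \<longleftrightarrow> (\<exists>I. rt_ideal m s I \<and> J = rt_elems m s - I)"

text \<open>An N x n array over the alphabet {0..<v}: A r c is the entry in row r (r < N) and
  column c.\<close>

definition covered :: "nat \<Rightarrow> nat \<Rightarrow> (nat \<Rightarrow> nat \<Rightarrow> nat) \<Rightarrow> nat set \<Rightarrow> bool" where
  "covered N v A C \<longleftrightarrow>
     (\<forall>f. (\<forall>c\<in>C. f c < v) \<longrightarrow> (\<exists>r<N. \<forall>c\<in>C. A r c = f c))"

definition is_OCA :: "nat \<Rightarrow> nat \<Rightarrow> nat \<Rightarrow> nat \<Rightarrow> nat \<Rightarrow> (nat \<Rightarrow> nat \<Rightarrow> nat) \<Rightarrow> bool" where
  "is_OCA N t m s v A \<longleftrightarrow>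
     2 \<le> t \<and> t \<le> m * s \<and>
     (\<forall>r<N. \<forall>c\<in>rt_elems m s. A r c < v) \<and>
     (\<forall>J. rt_anti_ideal m s J \<and> card J = t \<longrightarrow> covered N v A J)"

definition OCA_exists :: "nat \<Rightarrow> nat \<Rightarrow> nat \<Rightarrow> nat \<Rightarrow> nat \<Rightarrow> bool" where
  "OCA_exists N t m s v \<longleftrightarrow> (\<exists>A. is_OCA N t m s v A)"

definition OCAN :: "nat \<Rightarrow> nat \<Rightarrow> nat \<Rightarrow> nat \<Rightarrow> nat" where
  "OCAN t m s v = (LEAST N. OCA_exists N t m s v)"

end

theory Submission
  imports Defs Complex_Main "HOL-Combinatorics.Multiset_Permutations"
begin

(* The columns of an OCA(N;2,m,2,2) labelled by the tops 2, 4, ..., 2m of the m chains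
   pairwise form anti-ideals, so the sets of rows in which they carry the symbol 1 are
   pairwise qualitatively independent: all four Venn regions of any two of them meet the
   rows. Replacing each set by its smaller side yields an intersecting antichain of sets of
   size at most N/2, which Katona's cyclic-order argument bounds by C(N-1, floor(N/2)-1).
   Conversely, distinct floor(N/2)-subsets of the rows that share a common row are pairwise
   qualitatively independent and serve as top columns; a bottom column only has to be
   independent of the top of its own chain, which a suitable two-point set achieves. *)

section \<open>Arcs of a cyclic order\<close>

definition arc :: "nat \<Rightarrow> nat \<Rightarrow> nat \<Rightarrow> nat set" where
  "arc n i b = (\<lambda>k. (i + k) mod n) ` {..<b}"

lemma mem_arc:
  assumes "i < n" "b \<le> n"
  shows "x \<in> arc n i b \<longleftrightarrow> x < n \<and> (i \<le> x \<and> x < i + b \<or> x + n < i + b)"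
proof
  assume "x \<in> arc n i b"
  then obtain k where k: "k < b" "x = (i + k) mod n" unfolding arc_def by auto
  show "x < n \<and> (i \<le> x \<and> x < i + b \<or> x + n < i + b)"
  proof (cases "i + k < n")
    case False
    then have "x = i + k - n" using k assms by (simp add: mod_if)
    then show ?thesis using k assms False by auto
  qed (use k in auto)
next
  assume x: "x < n \<and> (i \<le> x \<and> x < i + b \<or> x + n < i + b)"
  show "x \<in> arc n i b"
  proof (cases "i \<le> x \<and> x < i + b")
    case True
    then have "x = (i + (x - i)) mod n" "x - i < b" using x by auto
    then show ?thesis unfolding arc_def by blast
  next
    case False
    then have "x = (i + (x + n - i)) mod n" "x + n - i < b" using x assms by auto
    then show ?thesis unfolding arc_def by blast
  qed
qed

lemma arc_subset_lessThan: "0 < n \<Longrightarrow> arc n i b \<subseteq> {..<n}"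
  unfolding arc_def by auto

lemma arc_rotate: "arc n ((i + c) mod n) b = (\<lambda>x. (x + c) mod n) ` arc n i b"
proof -
  have "((i + c) mod n + k) mod n = ((i + k) mod n + c) mod n" for k
    by (metis add.commute add.left_commute mod_add_left_eq)
  then show ?thesis unfolding arc_def image_image by simp
qed

lemma arc_eq_imp_start_eq:
  assumes "i < n" "j < n" "1 \<le> b" "1 \<le> c" "2 * b \<le> n" "2 * c \<le> n"
    and "arc n i b = arc n j c"
  shows "i = j"
proof -
  have "i \<in> arc n i b" "j \<in> arc n j c"
    using mem_arc[of i n b i] mem_arc[of j n c j] assms by auto
  then have "i \<in> arc n j c" "j \<in> arc n i b" using assms(7) by auto
  then have "j \<le> i \<and> i < j + c \<or> i + n < j + c" "i \<le> j \<and> j < i + b \<or> j + n < i + b"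
    using mem_arc[of j n c i] mem_arc[of i n b j] assms by auto
  then show ?thesis using assms(1-6) by (elim conjE disjE) linarith+
qed

lemma set_take_rotate_eq_arc:
  assumes "b \<le> length xs"
  shows "set (take b (rotate i xs)) = (!) xs ` arc (length xs) i b"
proof -
  have "set (take b (rotate i xs)) = (!) (rotate i xs) ` {..<b}"
    using nth_image[of b "rotate i xs"] assms by (simp add: lessThan_atLeast0)
  also have "\<dots> = (\<lambda>k. xs ! ((i + k) mod length xs)) ` {..<b}"
    using assms by (intro image_cong) (auto simp: nth_rotate)
  finally show ?thesis unfolding arc_def by (simp add: image_image)
qed

lemma arc_0: "a \<le> n \<Longrightarrow> arc n 0 a = {..<a}"
  unfolding arc_def by (auto intro: image_eqI)

lemma arc_crossing_initial_arc:
  assumes "a \<le> i" "i < n" "b \<le> n" "arc n i b \<inter> {..<a} \<noteq> {}" "\<not> {..<a} \<subseteq> arc n i b"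
  shows "n < i + b \<and> i + b < n + a"
proof -
  obtain x where "x \<in> arc n i b" "x < a" using assms(4) by blast
  then have "n < i + b" using mem_arc[of i n b x] assms(1-3) by auto
  moreover obtain y where "y \<notin> arc n i b" "y < a" using assms(5) by blast
  then have "i + b \<le> y + n" using mem_arc[of i n b y] assms(1-3) by auto
  ultimately show ?thesis using \<open>y < a\<close> by linarith
qed

lemma arc_end_eq_start_disjoint:
  assumes "i < n" "j < n" "2 * b \<le> n" "2 * c \<le> n" "j + c = i + n"
  shows "arc n i b \<inter> arc n j c = {}"
proof -
  have False if "x \<in> arc n i b" "x \<in> arc n j c" for x
  proof -
    have "i \<le> x \<and> x < i + b \<or> x + n < i + b" "j \<le> x \<and> x < j + c \<or> x + n < j + c"
      using that mem_arc[of i n b x] mem_arc[of j n c x] assms by auto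
    then show False using assms by (elim conjE disjE) linarith+
  qed
  then show ?thesis by blast
qed

lemma arc_same_end_subset:
  assumes "i \<le> j" "j < n" "b \<le> n" "c \<le> n" "i + b = j + c"
  shows "arc n j c \<subseteq> arc n i b"
proof
  fix x assume "x \<in> arc n j c"
  then have "x < n" "j \<le> x \<and> x < j + c \<or> x + n < j + c" using mem_arc[of j n c x] assms by auto
  then have "x < n" "i \<le> x \<and> x < i + b \<or> x + n < i + b" using assms by auto
  then show "x \<in> arc n i b" using mem_arc[of i n b x] assms by auto
qed

section \<open>Katona's bound for intersecting antichains\<close>

definition intersecting_antichain :: "'a set set \<Rightarrow> bool" where
  "intersecting_antichain F \<longleftrightarrow> pairwise (\<lambda>A B. A \<inter> B \<noteq> {} \<and> \<not> A \<subseteq> B) F"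

lemma intersecting_antichain_subset:
  "intersecting_antichain F \<Longrightarrow> G \<subseteq> F \<Longrightarrow> intersecting_antichain G"
  unfolding intersecting_antichain_def by (rule pairwise_subset)

lemma intersecting_antichain_image_iff:
  assumes f: "inj_on f S" and F: "\<And>A. A \<in> F \<Longrightarrow> A \<subseteq> S"
  shows "intersecting_antichain ((`) f ` F) \<longleftrightarrow> intersecting_antichain F"
proof -
  have key: "(f ` A \<noteq> f ` B \<longrightarrow> f ` A \<inter> f ` B \<noteq> {} \<and> \<not> f ` A \<subseteq> f ` B) \<longleftrightarrow>
        (A \<noteq> B \<longrightarrow> A \<inter> B \<noteq> {} \<and> \<not> A \<subseteq> B)" if "A \<subseteq> S" "B \<subseteq> S" for A B
  proof -
    have "f ` A \<inter> f ` B = {} \<longleftrightarrow> A \<inter> B = {}"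
      using inj_on_image_Int[OF f that] by (metis image_is_empty)
    moreover have "f ` A \<subseteq> f ` B \<longleftrightarrow> A \<subseteq> B"
      using inj_on_image_mem_iff[OF f] that by blast
    moreover have "f ` A = f ` B \<longleftrightarrow> A = B"
      using inj_on_image_eq_iff[OF f that] .
    ultimately show ?thesis by simp
  qed
  show ?thesis
    unfolding intersecting_antichain_def pairwise_image
    by (unfold pairwise_def) (intro ball_cong refl imp_cong; simp add: key F)
qed

lemma intersecting_antichain_imageD:
  assumes "intersecting_antichain (f ` I)" "inj_on f I" "i \<in> I" "j \<in> I" "i \<noteq> j"
  shows "f i \<inter> f j \<noteq> {} \<and> \<not> f i \<subseteq> f j"
proof -
  have "f i \<noteq> f j" using assms(2-5) by (auto dest: inj_onD)
  then show ?thesis using assms(1,3,4) unfolding intersecting_antichain_def pairwise_def by blast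
qed

lemma inj_on_arcs:
  assumes "I \<subseteq> {..<n}" "\<And>i. i \<in> I \<Longrightarrow> 1 \<le> len i \<and> 2 * len i \<le> n"
  shows "inj_on (\<lambda>i. arc n i (len i)) I"
  using arc_eq_imp_start_eq assms by (intro inj_onI) (meson lessThan_iff subsetD)

lemma katona_arcs_0:
  assumes I: "I \<subseteq> {..<n}" "0 \<in> I"
    and len: "\<And>i. i \<in> I \<Longrightarrow> 1 \<le> len i \<and> 2 * len i \<le> n"
    and F: "intersecting_antichain ((\<lambda>i. arc n i (len i)) ` I)"
  shows "card I \<le> len 0"
proof -
  let ?A = "\<lambda>i. arc n i (len i)"
  define a where "a = len 0"
  have a: "1 \<le> a" "2 * a \<le> n" using len[OF I(2)] unfolding a_def by auto
  have cross: "?A i \<inter> ?A j \<noteq> {} \<and> \<not> ?A i \<subseteq> ?A j" if "i \<in> I" "j \<in> I" "i \<noteq> j" for i j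
    using intersecting_antichain_imageD[OF F inj_on_arcs[OF I(1) len] that] .
  have lt_n: "i < n" if "i \<in> I" for i using I(1) that by auto
  have A0: "?A 0 = {..<a}" using arc_0 a unfolding a_def by simp
  have wraps: "n < i + len i \<and> i + len i < n + a" if i: "i \<in> I" "i \<noteq> 0" "a \<le> i" for i
    using arc_crossing_initial_arc[OF i(3) lt_n[OF i(1)]] len[OF i(1)] cross[OF i(1) I(2) i(2)]
      cross[OF I(2) i(1) i(2)[symmetric]] A0 by auto
  define \<phi> where "\<phi> i = (if i < a then i else i + len i - n)" for i
  \<comment> \<open>every other arc starts or ends strictly inside the arc {..<a} at 0; \<phi> picks that point\<close>
  have \<phi>_range: "\<phi> ` (I - {0}) \<subseteq> {1..<a}"
  proof
    fix z assume "z \<in> \<phi> ` (I - {0})"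
    then obtain i where "i \<in> I" "i \<noteq> 0" "z = \<phi> i" by auto
    then show "z \<in> {1..<a}" using wraps[of i] unfolding \<phi>_def by (cases "i < a") auto
  qed
  have start_ne_end: "\<phi> i \<noteq> \<phi> j" if "i \<in> I" "j \<in> I" "j \<noteq> 0" "i < a" "a \<le> j" for i j
  proof
    assume "\<phi> i = \<phi> j"
    then have "j + len j = i + n" using wraps[OF that(2,3,5)] that(4,5) unfolding \<phi>_def by auto
    then have "?A i \<inter> ?A j = {}"
      using arc_end_eq_start_disjoint lt_n len that(1,2) by blast
    then show False using cross[OF that(1,2)] that(4,5) by auto
  qed
  have end_le_end: "i \<le> j" if "i \<in> I" "j \<in> I" "i \<noteq> 0" "j \<noteq> 0" "a \<le> i" "a \<le> j"
    and "\<phi> i = \<phi> j" for i j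
  proof (rule ccontr)
    assume "\<not> i \<le> j"
    moreover have "j + len j = i + len i"
      using \<open>\<phi> i = \<phi> j\<close> wraps[OF that(1,3,5)] wraps[OF that(2,4,6)] that(5,6) unfolding \<phi>_def by auto
    ultimately have "?A i \<subseteq> ?A j"
      using arc_same_end_subset[of j i n "len j" "len i"] lt_n len that(1,2) by fastforce
    then show False using cross[OF that(1,2)] \<open>\<not> i \<le> j\<close> by auto
  qed
  have "inj_on \<phi> (I - {0})"
  proof (rule inj_onI)
    fix i j assume i: "i \<in> I - {0}" and j: "j \<in> I - {0}" and eq: "\<phi> i = \<phi> j"
    show "i = j"
    proof (cases "i < a"; cases "j < a")
      assume "i < a" "j < a"
      then show ?thesis using eq unfolding \<phi>_def by simp
    next
      assume "i < a" "\<not> j < a"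
      then show ?thesis using start_ne_end[of i j] i j eq by simp
    next
      assume "\<not> i < a" "j < a"
      then show ?thesis using start_ne_end[of j i] i j eq by simp
    next
      assume "\<not> i < a" "\<not> j < a"
      then show ?thesis using end_le_end[of i j] end_le_end[of j i] i j eq by simp
    qed
  qed
  then have "card (I - {0}) \<le> a - 1"
    using card_inj_on_le[OF _ \<phi>_range] by simp
  moreover have "finite I" using I(1) finite_subset by blast
  ultimately show ?thesis using I(2) a unfolding a_def by (simp add: card_Diff_singleton)
qed

lemma katona_arcs:
  assumes I: "I \<subseteq> {..<n}" "i0 \<in> I"
    and len: "\<And>i. i \<in> I \<Longrightarrow> 1 \<le> len i \<and> 2 * len i \<le> n"
    and F: "intersecting_antichain ((\<lambda>i. arc n i (len i)) ` I)"
  shows "card I \<le> len i0"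
proof -
  have i0: "i0 < n" using I by auto
  define \<tau> where "\<tau> x = (x + (n - i0)) mod n" for x
  define len' where "len' j = len ((j + i0) mod n)" for j
  have \<tau>_inverse: "(\<tau> x + i0) mod n = x" if "x < n" for x
  proof -
    have "(\<tau> x + i0) mod n = (x + (n - i0) + i0) mod n" unfolding \<tau>_def by (simp add: mod_add_left_eq)
    also have "\<dots> = x" using i0 that by simp
    finally show ?thesis .
  qed
  have inj: "inj_on \<tau> {..<n}" by (rule inj_on_inverseI[where g = "\<lambda>y. (y + i0) mod n"]) (use \<tau>_inverse in auto)
  have len'_\<tau>: "len' (\<tau> i) = len i" if "i \<in> I" for i using \<tau>_inverse I that unfolding len'_def by auto
  have "card (\<tau> ` I) \<le> len' 0"
  proof (rule katona_arcs_0)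
    show "\<tau> ` I \<subseteq> {..<n}" unfolding \<tau>_def using i0 by auto
    have "\<tau> i0 = 0" unfolding \<tau>_def using i0 by simp
    then show "0 \<in> \<tau> ` I" using I(2) by (metis image_eqI)
    show "1 \<le> len' j \<and> 2 * len' j \<le> n" if "j \<in> \<tau> ` I" for j using that len len'_\<tau> by auto
    have "(\<lambda>j. arc n j (len' j)) ` \<tau> ` I = (`) \<tau> ` (\<lambda>i. arc n i (len i)) ` I"
      using len'_\<tau> arc_rotate[of n _ "n - i0"] unfolding image_image \<tau>_def by (intro image_cong) auto
    moreover have "intersecting_antichain ((`) \<tau> ` (\<lambda>i. arc n i (len i)) ` I)"
      using F arc_subset_lessThan[of n] i0 by (subst intersecting_antichain_image_iff[OF inj]) auto
    ultimately show "intersecting_antichain ((\<lambda>j. arc n j (len' j)) ` \<tau> ` I)" by simp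
  qed
  moreover have "card (\<tau> ` I) = card I" using card_image inj_on_subset[OF inj I(1)] by blast
  ultimately show ?thesis unfolding len'_def using i0 by simp
qed

lemma katona_arcs_sum:
  assumes "I \<subseteq> {..<n}"
    and "\<And>i. i \<in> I \<Longrightarrow> 1 \<le> len i \<and> 2 * len i \<le> n"
    and "intersecting_antichain ((\<lambda>i. arc n i (len i)) ` I)"
  shows "(\<Sum>i\<in>I. 1 / real (len i)) \<le> 1"
proof -
  have fin: "finite I" using assms(1) finite_subset by blast
  have "(\<Sum>i\<in>I. 1 / real (len i)) \<le> (\<Sum>i\<in>I. 1 / real (card I))"
  proof (rule sum_mono)
    fix i assume i: "i \<in> I"
    then have "card I \<le> len i" "0 < card I" using katona_arcs[OF assms(1) i assms(2,3)] fin
      by (auto simp: card_gt_0_iff)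
    then show "1 / real (len i) \<le> 1 / real (card I)" by (simp add: frac_le)
  qed
  also have "\<dots> \<le> 1" by simp
  finally show ?thesis .
qed

lemma antichain_prefix_unique:
  assumes "intersecting_antichain F" "A \<in> F" "B \<in> F"
    and "set (take (card A) xs) = A" "set (take (card B) xs) = B"
  shows "A = B"
proof -
  have "A \<subseteq> B \<or> B \<subseteq> A"
    using set_take_subset_set_take[of "card A" "card B" xs] set_take_subset_set_take[of "card B" "card A" xs]
      assms(4,5) by (cases "card A \<le> card B") auto
  then show ?thesis using assms(1-3) unfolding intersecting_antichain_def pairwise_def by blast
qed

lemma katona_rotations:
  assumes xs: "distinct xs" "length xs = n"
    and F: "finite F" "intersecting_antichain F" "\<And>A. A \<in> F \<Longrightarrow> 1 \<le> card A \<and> 2 * card A \<le> n"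
  shows "(\<Sum>i<n. \<Sum>A\<in>F. if set (take (card A) (rotate i xs)) = A then 1 / real (card A) else 0) \<le> 1"
proof -
  define P where "P i A \<longleftrightarrow> A \<in> F \<and> set (take (card A) (rotate i xs)) = A" for i A
  define I where "I = {i. i < n \<and> (\<exists>A. P i A)}"
  define Ai where "Ai i = (SOME A. P i A)" for i
  define len where "len i = card (Ai i)" for i
  have P_Ai: "P i (Ai i)" if "i \<in> I" for i
    using that someI_ex[of "P i"] unfolding I_def Ai_def by blast
  have P_iff: "P i A \<longleftrightarrow> i \<in> I \<and> A = Ai i" if "i < n" for i A
    using antichain_prefix_unique[OF F(2)] P_Ai that unfolding I_def P_def by blast
  have len: "1 \<le> len i \<and> 2 * len i \<le> n" if "i \<in> I" for i
    using P_Ai[OF that] F(3) unfolding P_def len_def by auto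
  have Ai_arc: "Ai i = (!) xs ` arc n i (len i)" if "i \<in> I" for i
    using P_Ai[OF that] set_take_rotate_eq_arc[of "len i" xs i] len[OF that] xs(2)
    unfolding P_def len_def by auto
  have "(\<Sum>A\<in>F. if set (take (card A) (rotate i xs)) = A then 1 / real (card A) else 0)
      = (if i \<in> I then 1 / real (len i) else 0)" if "i < n" for i
  proof -
    have "(\<Sum>A\<in>F. if set (take (card A) (rotate i xs)) = A then 1 / real (card A) else 0)
        = (\<Sum>A\<in>F. if i \<in> I \<and> A = Ai i then 1 / real (card A) else 0)"
      using P_iff[OF that] unfolding P_def by (intro sum.cong) auto
    also have "\<dots> = (if i \<in> I then 1 / real (len i) else 0)"
      using F(1) P_Ai unfolding P_def len_def by (auto simp: sum.delta')
    finally show ?thesis .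
  qed
  then have "(\<Sum>i<n. \<Sum>A\<in>F. if set (take (card A) (rotate i xs)) = A then 1 / real (card A) else 0)
      = (\<Sum>i\<in>I. 1 / real (len i))"
    using sum.inter_restrict[of "{..<n}" "\<lambda>i. 1 / real (len i)" I] by (simp add: I_def Int_def)
  also have "\<dots> \<le> 1"
  proof (rule katona_arcs_sum)
    show I: "I \<subseteq> {..<n}" unfolding I_def by auto
    show "1 \<le> len i \<and> 2 * len i \<le> n" if "i \<in> I" for i using len[OF that] .
    have "(`) ((!) xs) ` (\<lambda>i. arc n i (len i)) ` I = Ai ` I"
      using Ai_arc unfolding image_image by simp
    moreover have "Ai ` I \<subseteq> F" using P_Ai unfolding P_def by auto
    ultimately have "intersecting_antichain ((`) ((!) xs) ` (\<lambda>i. arc n i (len i)) ` I)"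
      using intersecting_antichain_subset[OF F(2)] by simp
    moreover have "inj_on ((!) xs) {..<n}" using inj_on_nth[OF xs(1)] xs(2) by simp
    moreover have "arc n i (len i) \<subseteq> {..<n}" if "i \<in> I" for i
      using arc_subset_lessThan[of n] I that by fastforce
    ultimately show "intersecting_antichain ((\<lambda>i. arc n i (len i)) ` I)"
      using intersecting_antichain_image_iff[of "(!) xs" "{..<n}" "(\<lambda>i. arc n i (len i)) ` I"] by auto
  qed
  finally show ?thesis .
qed

lemma card_prefix_permutations:
  assumes S: "finite S" and A: "A \<subseteq> S"
  shows "card {ys \<in> permutations_of_set S. set (take (card A) ys) = A} = fact (card A) * fact (card S - card A)"
proof -
  define split where "split p = fst p @ snd p" for p :: "'a list \<times> 'a list"
  let ?P = "permutations_of_set A \<times> permutations_of_set (S - A)"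
  have fA: "finite A" using S A finite_subset by blast
  have len: "length us = card A" if "us \<in> permutations_of_set A" for us
    using that distinct_card by (fastforce simp: permutations_of_set_def)
  have "{ys \<in> permutations_of_set S. set (take (card A) ys) = A} = split ` ?P"
  proof (intro equalityI subsetI)
    fix ys assume "ys \<in> {ys \<in> permutations_of_set S. set (take (card A) ys) = A}"
    then have ys: "set ys = S" "distinct ys" "set (take (card A) ys) = A"
      by (auto simp: permutations_of_set_def)
    have "set (take (card A) ys) \<inter> set (drop (card A) ys) = {}"
      using ys(2) by (metis append_take_drop_id distinct_append)
    moreover have "set (take (card A) ys) \<union> set (drop (card A) ys) = S"
      using ys(1) by (metis append_take_drop_id set_append)
    ultimately have "set (drop (card A) ys) = S - A" using ys(3) by blast
    then have "(take (card A) ys, drop (card A) ys) \<in> ?P"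
      using ys by (auto simp: permutations_of_set_def)
    moreover have "ys = split (take (card A) ys, drop (card A) ys)" unfolding split_def by simp
    ultimately show "ys \<in> split ` ?P" by blast
  next
    fix ys assume "ys \<in> split ` ?P"
    then obtain us vs where "ys = us @ vs" "us \<in> permutations_of_set A" "vs \<in> permutations_of_set (S - A)"
      unfolding split_def by auto
    then show "ys \<in> {ys \<in> permutations_of_set S. set (take (card A) ys) = A}"
      using len A by (auto simp: permutations_of_set_def)
  qed
  moreover have "inj_on split ?P"
  proof (rule inj_onI)
    fix p q assume "p \<in> ?P" "q \<in> ?P" "split p = split q"
    then show "p = q" using len unfolding split_def by (metis append_eq_append_conv mem_Times_iff prod.collapse)
  qed
  ultimately have "card {ys \<in> permutations_of_set S. set (take (card A) ys) = A} = card ?P"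
    by (simp add: card_image)
  also have "\<dots> = fact (card A) * fact (card S - card A)"
    using fA S A by (simp add: card_cartesian_product card_Diff_subset)
  finally show ?thesis .
qed

lemma bij_betw_rotate_permutations_of_set:
  "bij_betw (rotate i) (permutations_of_set S) (permutations_of_set S)"
proof (rule bij_betw_imageI)
  have "bij (rotate i :: 'a list \<Rightarrow> 'a list)"
    unfolding rotate_def by (rule bij_fn[OF bij_rotate1])
  then show "inj_on (rotate i) (permutations_of_set S)" by (metis bij_is_inj inj_on_subset subset_UNIV)
  have perm_iff: "rotate i xs \<in> permutations_of_set S \<longleftrightarrow> xs \<in> permutations_of_set S" for xs :: "'a list"
    by (simp add: permutations_of_set_def)
  show "rotate i ` permutations_of_set S = permutations_of_set S"
  proof
    show "rotate i ` permutations_of_set S \<subseteq> permutations_of_set S" using perm_iff by blast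
    show "permutations_of_set S \<subseteq> rotate i ` permutations_of_set S"
    proof
      fix ys assume ys: "ys \<in> permutations_of_set S"
      obtain xs where "ys = rotate i xs" using bij_is_surj[OF \<open>bij (rotate i)\<close>] by (metis surjD)
      then show "ys \<in> rotate i ` permutations_of_set S" using ys perm_iff by blast
    qed
  qed
qed

lemma sum_prefix_weight:
  assumes "A \<subseteq> {..<n}" "1 \<le> card A"
  shows "(\<Sum>ys\<in>permutations_of_set {..<n}. if set (take (card A) ys) = A then 1 / real (card A) else 0)
    = fact (n - 1) / real ((n - 1) choose (card A - 1))"
proof -
  have A: "card A \<le> n" using card_mono[OF _ assms(1)] by simp
  have "(\<Sum>ys\<in>permutations_of_set {..<n}. if set (take (card A) ys) = A then 1 / real (card A) else 0)
      = card {ys \<in> permutations_of_set {..<n}. set (take (card A) ys) = A} / real (card A)"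
    by (simp add: sum.inter_filter[symmetric])
  also have "\<dots> = fact (card A) * fact (n - card A) / real (card A)"
    using card_prefix_permutations[of "{..<n}" A] assms(1) by simp
  also have "\<dots> = fact (card A - 1) * fact (n - card A)"
    using fact_reduce[of "card A", where 'a = real] assms(2) by simp
  also have "\<dots> = fact (n - 1) / real ((n - 1) choose (card A - 1))"
    using binomial_fact[of "card A - 1" "n - 1", where 'a = real] assms(2) A by (simp add: Suc_diff_le)
  finally show ?thesis .
qed

lemma lym_intersecting_antichain:
  assumes F: "F \<subseteq> Pow {..<n}" "intersecting_antichain F"
    and size: "\<And>A. A \<in> F \<Longrightarrow> 1 \<le> card A \<and> 2 * card A \<le> n"
  shows "(\<Sum>A\<in>F. 1 / real ((n - 1) choose (card A - 1))) \<le> 1"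
proof (cases "n = 0")
  case True
  then have "F = {}" using size by fastforce
  then show ?thesis by simp
next
  case False
  define P where "P = permutations_of_set {..<n}"
  define w where "w ys A = (if set (take (card A) ys) = A then 1 / real (card A) else 0)"
    for ys :: "nat list" and A :: "nat set"
  have finF: "finite F" using F(1) finite_subset by blast
  \<comment> \<open>double count over all rotations of all linear orders of {..<n}\<close>
  have "fact n * (\<Sum>A\<in>F. 1 / real ((n - 1) choose (card A - 1)))
      = (\<Sum>i<n. \<Sum>A\<in>F. fact (n - 1) / real ((n - 1) choose (card A - 1)))"
    using fact_reduce[of n, where 'a = real] False by (simp add: sum_distrib_left)
  also have "\<dots> = (\<Sum>i<n. \<Sum>A\<in>F. \<Sum>ys\<in>P. w ys A)"
    using sum_prefix_weight F(1) size unfolding P_def w_def by (intro sum.cong refl) auto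
  also have "\<dots> = (\<Sum>i<n. \<Sum>A\<in>F. \<Sum>xs\<in>P. w (rotate i xs) A)"
    unfolding P_def
    by (intro sum.cong refl sum.reindex_bij_betw[OF bij_betw_rotate_permutations_of_set, symmetric])
  also have "\<dots> = (\<Sum>i<n. \<Sum>xs\<in>P. \<Sum>A\<in>F. w (rotate i xs) A)"
    by (intro sum.cong refl sum.swap)
  also have "\<dots> = (\<Sum>xs\<in>P. \<Sum>i<n. \<Sum>A\<in>F. w (rotate i xs) A)"
    by (rule sum.swap)
  also have "\<dots> \<le> (\<Sum>xs\<in>P. 1)"
  proof (rule sum_mono)
    fix xs assume "xs \<in> P"
    then have "distinct xs" "length xs = n"
      unfolding P_def by (auto simp: permutations_of_set_def distinct_card[symmetric])
    from katona_rotations[OF this finF F(2) size]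
    show "(\<Sum>i<n. \<Sum>A\<in>F. w (rotate i xs) A) \<le> 1" unfolding w_def .
  qed
  also have "\<dots> = fact n" unfolding P_def by simp
  finally show ?thesis by simp
qed

lemma card_intersecting_antichain_le:
  assumes F: "F \<subseteq> Pow {..<n}" "intersecting_antichain F"
    and size: "\<And>A. A \<in> F \<Longrightarrow> 1 \<le> card A \<and> 2 * card A \<le> n"
  shows "card F \<le> (n - 1) choose (n div 2 - 1)"
proof -
  let ?K = "(n - 1) choose (n div 2 - 1)"
  have "0 < ?K" by simp
  have "1 / real ?K \<le> 1 / real ((n - 1) choose (card A - 1))" if "A \<in> F" for A
  proof -
    have "(n - 1) choose (card A - 1) \<le> ?K"
      using size[OF that] by (intro binomial_mono) auto
    moreover have "card A - 1 \<le> n - 1" using size[OF that] by linarith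
    then have "0 < (n - 1) choose (card A - 1)" by simp
    ultimately show ?thesis by (simp add: frac_le)
  qed
  then have "real (card F) / real ?K \<le> (\<Sum>A\<in>F. 1 / real ((n - 1) choose (card A - 1)))"
    using sum_mono[of F "\<lambda>_. 1 / real ?K"] by simp
  also have "\<dots> \<le> 1" using lym_intersecting_antichain[OF F size] .
  finally show ?thesis using \<open>0 < ?K\<close> by simp
qed

section \<open>Qualitatively independent sets\<close>

definition qualitatively_independent :: "'a set \<Rightarrow> 'a set \<Rightarrow> 'a set \<Rightarrow> bool" where
  "qualitatively_independent U X Y \<longleftrightarrow> (\<forall>P Q. \<exists>r\<in>U. (r \<in> X \<longleftrightarrow> P) \<and> (r \<in> Y \<longleftrightarrow> Q))"

lemma qualitatively_independent_commute:
  "qualitatively_independent U X Y \<longleftrightarrow> qualitatively_independent U Y X"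
  unfolding qualitatively_independent_def by blast

lemma qualitatively_independent_Int:
  "qualitatively_independent U (X \<inter> U) Y \<longleftrightarrow> qualitatively_independent U X Y"
  unfolding qualitatively_independent_def by blast

lemma qualitatively_independent_Diff:
  "qualitatively_independent U (U - X) Y \<longleftrightarrow> qualitatively_independent U X Y"
  unfolding qualitatively_independent_def by (metis Diff_iff)

lemma qualitatively_independentD:
  assumes "qualitatively_independent U X Y" "X \<subseteq> U"
  shows "X \<inter> Y \<noteq> {}" "\<not> X \<subseteq> Y" "X \<noteq> Y"
  using assms unfolding qualitatively_independent_def by blast+

lemma card_qualitatively_independent_le:
  assumes indep: "\<And>i j. i < m \<Longrightarrow> j < m \<Longrightarrow> i \<noteq> j \<Longrightarrow> qualitatively_independent {..<N} (X i) (X j)"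
  shows "m \<le> (N - 1) choose (N div 2 - 1)"
proof (cases "m \<le> 1")
  case True
  have "0 < (N - 1) choose (N div 2 - 1)" by simp
  then show ?thesis using True by linarith
next
  case False
  let ?U = "{..<N}"
  define T where "T i = (if 2 * card (X i \<inter> ?U) \<le> N then X i \<inter> ?U else ?U - X i)" for i
  have T_sub: "T i \<subseteq> ?U" for i unfolding T_def by auto
  have T_half: "2 * card (T i) \<le> N" for i
  proof (cases "2 * card (X i \<inter> ?U) \<le> N")
    case False
    have "?U - X i = ?U - (X i \<inter> ?U)" by blast
    then have "card (?U - X i) = N - card (X i \<inter> ?U)"
      using card_Diff_subset[of "X i \<inter> ?U" ?U] by simp
    then show ?thesis using False unfolding T_def by simp
  qed (simp add: T_def)
  have T_iff: "qualitatively_independent ?U (T i) Y \<longleftrightarrow> qualitatively_independent ?U (X i) Y" for i Y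
    unfolding T_def by (simp add: qualitatively_independent_Int qualitatively_independent_Diff)
  have T_indep: "qualitatively_independent ?U (T i) (T j)" if "i < m" "j < m" "i \<noteq> j" for i j
    using indep[OF that] T_iff qualitatively_independent_commute by metis
  have T_ne: "T i \<noteq> {}" if "i < m" for i
  proof -
    define j where "j = (if i = 0 then 1 else 0 :: nat)"
    have "j < m" "i \<noteq> j" using False unfolding j_def by auto
    then show ?thesis using qualitatively_independentD(1)[OF T_indep[OF that] T_sub] by blast
  qed
  have "inj_on T {..<m}"
    using qualitatively_independentD(3)[OF T_indep T_sub] by (intro inj_onI) blast
  then have "m = card (T ` {..<m})" by (simp add: card_image)
  also have "\<dots> \<le> (N - 1) choose (N div 2 - 1)"
  proof (rule card_intersecting_antichain_le)
    show "T ` {..<m} \<subseteq> Pow ?U" using T_sub by auto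
    show "intersecting_antichain (T ` {..<m})"
      unfolding intersecting_antichain_def pairwise_def
      using qualitatively_independentD(1,2)[OF T_indep T_sub] by blast
    show "1 \<le> card A \<and> 2 * card A \<le> N" if "A \<in> T ` {..<m}" for A
      using that T_ne T_half T_sub finite_subset[OF T_sub] by (auto simp: Suc_le_eq card_gt_0_iff)
  qed
  finally show ?thesis .
qed

lemma qualitatively_independentI:
  assumes "x11 \<in> U \<inter> X \<inter> Y" "x10 \<in> U \<inter> X - Y" "x01 \<in> U \<inter> Y - X" "x00 \<in> U - (X \<union> Y)"
  shows "qualitatively_independent U X Y"
  unfolding qualitatively_independent_def
proof (intro allI)
  fix P Q
  consider "P" "Q" | "P" "\<not> Q" | "\<not> P" "Q" | "\<not> P" "\<not> Q" by blast
  then show "\<exists>r\<in>U. (r \<in> X \<longleftrightarrow> P) \<and> (r \<in> Y \<longleftrightarrow> Q)"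
  proof cases
    case 1 then show ?thesis using assms(1) by (intro bexI[of _ x11]) auto
  next
    case 2 then show ?thesis using assms(2) by (intro bexI[of _ x10]) auto
  next
    case 3 then show ?thesis using assms(3) by (intro bexI[of _ x01]) auto
  next
    case 4 then show ?thesis using assms(4) by (intro bexI[of _ x00]) auto
  qed
qed

lemma two_le_card_obtains:
  assumes "2 \<le> card X"
  obtains x y where "x \<in> X" "y \<in> X" "x \<noteq> y"
  using assms by (auto simp: numeral_2_eq_2 card_le_Suc_iff)

lemma qualitatively_independent_equal_card:
  assumes U: "finite U" "X \<subseteq> U" "Y \<subseteq> U" "2 * card X \<le> card U"
    and XY: "X \<noteq> Y" "card X = card Y" "x \<in> X \<inter> Y"
  shows "qualitatively_independent U X Y"
proof -
  have fin: "finite X" "finite Y" using U finite_subset by blast+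
  have "\<not> X \<subseteq> Y" "\<not> Y \<subseteq> X"
    using card_subset_eq[OF fin(2), of X] card_subset_eq[OF fin(1), of Y] XY(1,2) by auto
  then obtain x10 x01 where "x10 \<in> X - Y" "x01 \<in> Y - X" by blast
  moreover have "0 < card (X \<inter> Y)" using XY(3) fin by (auto simp: card_gt_0_iff)
  then have "card (X \<union> Y) < card U" using card_Un_Int[OF fin] XY(2) U(4) by linarith
  then have "\<not> U \<subseteq> X \<union> Y" using card_mono[of "X \<union> Y" U] fin by auto
  then obtain x00 where "x00 \<in> U - (X \<union> Y)" by blast
  ultimately show ?thesis using U(2,3) XY(3) by (intro qualitatively_independentI[of x _ _ _ x10 x01 x00]) auto
qed

lemma qualitatively_independent_partner:
  assumes "X \<subseteq> U" "2 \<le> card X" "2 \<le> card (U - X)"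
  obtains Y where "qualitatively_independent U Y X"
proof -
  obtain s1 s2 where "s1 \<in> X" "s2 \<in> X" "s1 \<noteq> s2" using two_le_card_obtains[OF assms(2)] .
  moreover obtain t1 t2 where "t1 \<in> U - X" "t2 \<in> U - X" "t1 \<noteq> t2"
    using two_le_card_obtains[OF assms(3)] .
  ultimately have "qualitatively_independent U {s1, t1} X"
    using assms(1) by (intro qualitatively_independentI[of s1 _ _ _ t1 s2 t2]) auto
  then show ?thesis using that by blast
qed

lemma card_subsets_containing:
  assumes "1 \<le> k" "x \<in> U" "finite U"
  shows "card {B. B \<subseteq> U \<and> x \<in> B \<and> card B = k} = (card U - 1) choose (k - 1)"
proof -
  let ?C = "{C. C \<subseteq> U - {x} \<and> card C = k - 1}"
  have "{B. B \<subseteq> U \<and> x \<in> B \<and> card B = k} = insert x ` ?C"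
  proof (intro equalityI subsetI)
    fix B assume "B \<in> {B. B \<subseteq> U \<and> x \<in> B \<and> card B = k}"
    then have "B - {x} \<in> ?C" "B = insert x (B - {x})"
      using finite_subset[OF _ assms(3)] by (auto simp: card_Diff_singleton)
    then show "B \<in> insert x ` ?C" by blast
  next
    fix B assume "B \<in> insert x ` ?C"
    then obtain C where C: "C \<subseteq> U - {x}" "card C = k - 1" "B = insert x C" by auto
    then have "finite C" "x \<notin> C" using assms(3) finite_subset by auto
    then show "B \<in> {B. B \<subseteq> U \<and> x \<in> B \<and> card B = k}"
      using assms C by auto
  qed
  moreover have "inj_on (insert x) ?C"
  proof (rule inj_onI)
    fix C D assume "C \<in> ?C" "D \<in> ?C" "insert x C = insert x D"
    then have "x \<notin> C" "x \<notin> D" "insert x C = insert x D" by auto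
    then show "C = D" by (metis Diff_insert_absorb)
  qed
  ultimately show ?thesis
    using n_subsets[of "U - {x}" "k - 1"] assms by (simp add: card_image)
qed

lemma two_le_half_if_le_choose:
  assumes "2 \<le> m" "m \<le> (N - 1) choose (N div 2 - 1)"
  shows "2 \<le> N div 2"
proof (rule ccontr)
  assume "\<not> 2 \<le> N div 2"
  then have "(N - 1) choose (N div 2 - 1) = 1" by simp
  then show False using assms by simp
qed

lemma qualitatively_independent_family_exists:
  assumes m: "2 \<le> m" and le: "m \<le> (N - 1) choose (N div 2 - 1)"
  obtains g h :: "nat \<Rightarrow> nat set"
  where "\<And>i j. i < m \<Longrightarrow> j < m \<Longrightarrow> i \<noteq> j \<Longrightarrow> qualitatively_independent {..<N} (g i) (g j)"
    and "\<And>i. i < m \<Longrightarrow> qualitatively_independent {..<N} (h i) (g i)"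
proof -
  let ?U = "{..<N}"
  define k where "k = N div 2"
  have k: "2 \<le> k" "2 * k \<le> N" using two_le_half_if_le_choose[OF m le] unfolding k_def by auto
  define G where "G = {B. B \<subseteq> ?U \<and> 0 \<in> B \<and> card B = k}"
  have "card G = (N - 1) choose (k - 1)"
    unfolding G_def using card_subsets_containing[of k 0 ?U] k by simp
  then have "card {..<m} \<le> card G" using le unfolding k_def by simp
  moreover have "finite G" unfolding G_def by (rule finite_subset[of _ "Pow ?U"]) auto
  ultimately obtain g where g: "g ` {..<m} \<subseteq> G" "inj_on g {..<m}"
    using card_le_inj[OF finite_lessThan] by blast
  then have g_sub: "g i \<subseteq> ?U" and g_0: "0 \<in> g i" and g_card: "card (g i) = k" if "i < m" for i
    using that unfolding G_def by auto
  have g_indep: "qualitatively_independent ?U (g i) (g j)" if "i < m" "j < m" "i \<noteq> j" for i j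
  proof (rule qualitatively_independent_equal_card)
    show "g i \<noteq> g j" using g(2) that by (auto dest: inj_onD)
    show "2 * card (g i) \<le> card ?U" using g_card[OF that(1)] k by simp
    show "0 \<in> g i \<inter> g j" using g_0 that by blast
  qed (use g_sub g_card that in auto)
  have "\<forall>i\<in>{..<m}. \<exists>Y. qualitatively_independent ?U Y (g i)"
  proof
    fix i assume "i \<in> {..<m}"
    then have i: "i < m" by simp
    have "card (?U - g i) = N - k"
      using g_sub[OF i] g_card[OF i] finite_subset[OF g_sub[OF i]] by (simp add: card_Diff_subset)
    then have "2 \<le> card (?U - g i)" using k by linarith
    then show "\<exists>Y. qualitatively_independent ?U Y (g i)"
      using qualitatively_independent_partner[OF g_sub[OF i]] g_card[OF i] k by blast
  qed
  from bchoice[OF this] obtain h where "\<forall>i\<in>{..<m}. qualitatively_independent ?U (h i) (g i)"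
    by blast
  then show ?thesis using that g_indep by blast
qed

section \<open>Ordered covering arrays on the poset [m x 2]\<close>

lemma rt_anti_ideal_iff:
  "rt_anti_ideal m s J \<longleftrightarrow> J \<subseteq> rt_elems m s \<and> (\<forall>x\<in>J. \<forall>y\<in>rt_elems m s. rt_le s x y \<longrightarrow> y \<in> J)"
proof
  assume "rt_anti_ideal m s J"
  then obtain I where I: "rt_ideal m s I" "J = rt_elems m s - I" unfolding rt_anti_ideal_def by blast
  then show "J \<subseteq> rt_elems m s \<and> (\<forall>x\<in>J. \<forall>y\<in>rt_elems m s. rt_le s x y \<longrightarrow> y \<in> J)"
    unfolding rt_ideal_def by blast
next
  assume J: "J \<subseteq> rt_elems m s \<and> (\<forall>x\<in>J. \<forall>y\<in>rt_elems m s. rt_le s x y \<longrightarrow> y \<in> J)"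
  then have "rt_ideal m s (rt_elems m s - J)" "J = rt_elems m s - (rt_elems m s - J)"
    unfolding rt_ideal_def by blast+
  then show "rt_anti_ideal m s J" unfolding rt_anti_ideal_def by blast
qed

lemma rt_anti_ideal_top_pair:
  assumes "i < m" "j < m"
  shows "rt_anti_ideal m 2 {2*i+2, 2*j+2}"
proof -
  have top: "y = 2*k+2" if "(y - 1) div 2 = (2*k+2 - 1) div 2" "2*k+2 \<le> y" for y k :: nat
    using that by presburger
  show ?thesis
    unfolding rt_anti_ideal_iff rt_le_def rt_elems_def using assms top by auto
qed

lemma rt_anti_ideal_card_2_cases:
  assumes J: "rt_anti_ideal m 2 J" "card J = 2"
  obtains (chain) i where "i < m" "J = {2*i+1, 2*i+2}"
    | (tops) i j where "i < m" "j < m" "i \<noteq> j" "J = {2*i+2, 2*j+2}"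
proof -
  have sub: "J \<subseteq> {1..m*2}" and up: "\<And>x y. x \<in> J \<Longrightarrow> y \<in> {1..m*2} \<Longrightarrow> rt_le 2 x y \<Longrightarrow> y \<in> J"
    using J(1) unfolding rt_anti_ideal_iff rt_elems_def by auto
  obtain x y where xy: "J = {x, y}" "x \<noteq> y" using J(2) card_2_iff by metis
  show ?thesis
  proof (cases "\<exists>z\<in>J. odd z")
    case True
    then obtain z where z: "z \<in> J" "odd z" by blast
    define i where "i = (z - 1) div 2"
    have z_eq: "z = 2*i+1" using z(2) unfolding i_def by presburger
    then have "i < m" using z(1) sub by auto
    have "2*i+2 \<in> {1..m*2}" "rt_le 2 z (2*i+2)" using \<open>i < m\<close> z_eq unfolding rt_le_def by auto
    then have "2*i+2 \<in> J" using up z(1) by blast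
    then have "J = {2*i+1, 2*i+2}" using xy z(1) z_eq by auto
    then show ?thesis using chain \<open>i < m\<close> by blast
  next
    case False
    then have "even x" "even y" "1 \<le> x" "1 \<le> y" using xy sub by auto
    define i j where "i = (x - 2) div 2" and "j = (y - 2) div 2"
    have "x = 2*i+2" "y = 2*j+2" unfolding i_def j_def
      using \<open>even x\<close> \<open>even y\<close> \<open>1 \<le> x\<close> \<open>1 \<le> y\<close> by presburger+
    moreover have "x \<le> m*2" "y \<le> m*2" using xy sub by auto
    ultimately show ?thesis using tops[of i j] xy by auto
  qed
qed

lemma covered_pair_iff:
  assumes "c \<noteq> d" "\<And>r. r < N \<Longrightarrow> A r c < 2" "\<And>r. r < N \<Longrightarrow> A r d < 2"
  shows "covered N 2 A {c, d} \<longleftrightarrow> qualitatively_independent {..<N} {r. A r c = 1} {r. A r d = 1}"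
proof
  assume cov: "covered N 2 A {c, d}"
  show "qualitatively_independent {..<N} {r. A r c = 1} {r. A r d = 1}"
    unfolding qualitatively_independent_def
  proof (intro allI)
    fix P Q
    obtain r where "r < N" "A r c = of_bool P" "A r d = of_bool Q"
      using cov assms(1) unfolding covered_def
      by (auto dest!: spec[of _ "\<lambda>x. if x = c then of_bool P else of_bool Q"])
    then show "\<exists>r\<in>{..<N}. (r \<in> {r. A r c = 1} \<longleftrightarrow> P) \<and> (r \<in> {r. A r d = 1} \<longleftrightarrow> Q)"
      by (intro bexI[of _ r]) auto
  qed
next
  assume indep: "qualitatively_independent {..<N} {r. A r c = 1} {r. A r d = 1}"
  show "covered N 2 A {c, d}"
    unfolding covered_def
  proof (intro allI impI)
    fix f :: "nat \<Rightarrow> nat" assume "\<forall>x\<in>{c, d}. f x < 2"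
    then have f: "f c < 2" "f d < 2" by auto
    obtain r where r: "r < N" "A r c = 1 \<longleftrightarrow> f c = 1" "A r d = 1 \<longleftrightarrow> f d = 1"
      using indep unfolding qualitatively_independent_def by blast
    then have "A r c = f c" "A r d = f d"
      using f assms(2,3)[OF r(1)] by (auto simp: less_2_cases_iff)
    then show "\<exists>r<N. \<forall>x\<in>{c, d}. A r x = f x" using \<open>r < N\<close> by auto
  qed
qed

lemma OCA_2_2_le_choose:
  assumes "is_OCA N 2 m 2 2 A"
  shows "m \<le> (N - 1) choose (N div 2 - 1)"
proof (rule card_qualitatively_independent_le)
  fix i j assume ij: "i < m" "j < m" "i \<noteq> j"
  have binary: "A r (2*k+2) < 2" if "r < N" "k < m" for r k
    using assms that unfolding is_OCA_def rt_elems_def by auto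
  have "covered N 2 A {2*i+2, 2*j+2}"
    using assms rt_anti_ideal_top_pair[OF ij(1,2)] ij(3) unfolding is_OCA_def by auto
  then show "qualitatively_independent {..<N} {r. A r (2*i+2) = 1} {r. A r (2*j+2) = 1}"
    using covered_pair_iff binary ij by simp
qed

lemma OCA_2_2_exists:
  assumes "2 \<le> m" "m \<le> (N - 1) choose (N div 2 - 1)"
  shows "OCA_exists N 2 m 2 2"
proof -
  obtain g h :: "nat \<Rightarrow> nat set"
    where g: "\<And>i j. i < m \<Longrightarrow> j < m \<Longrightarrow> i \<noteq> j \<Longrightarrow> qualitatively_independent {..<N} (g i) (g j)"
      and h: "\<And>i. i < m \<Longrightarrow> qualitatively_independent {..<N} (h i) (g i)"
    using qualitatively_independent_family_exists[OF assms] by metis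
  \<comment> \<open>chain i is 2i+1 < 2i+2: its top column is the indicator of g i, its bottom column that of h i\<close>
  define S where "S c = (if even c then g ((c - 2) div 2) else h ((c - 1) div 2))" for c :: nat
  define A :: "nat \<Rightarrow> nat \<Rightarrow> nat" where "A r c = of_bool (r \<in> S c)" for r c
  have A_binary: "A r c < 2" for r c unfolding A_def by simp
  have A_cols: "{r. A r (2*i+2) = 1} = g i" "{r. A r (2*i+1) = 1} = h i" for i
    unfolding A_def S_def by auto
  have "is_OCA N 2 m 2 2 A"
    unfolding is_OCA_def
  proof (intro conjI allI impI ballI)
    show "2 \<le> m * 2" using assms(1) by simp
    fix J assume "rt_anti_ideal m 2 J \<and> card J = 2"
    then show "covered N 2 A J"
    proof (elim conjE rt_anti_ideal_card_2_cases)
      fix i assume "i < m" "J = {2*i+1, 2*i+2}"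
      then show "covered N 2 A J" using covered_pair_iff A_binary A_cols h by simp
    next
      fix i j assume "i < m" "j < m" "i \<noteq> j" "J = {2*i+2, 2*j+2}"
      then show "covered N 2 A J" using covered_pair_iff A_binary A_cols g by simp
    qed
  qed (simp_all add: A_binary)
  then show ?thesis unfolding OCA_exists_def by blast
qed

theorem corollary2:
  fixes m :: nat
  assumes "m \<ge> 2"
  shows "OCAN 2 m 2 2 = (LEAST N::nat. 0 < N \<and> int m \<le> (if N div 2 \<ge> 1 then int ((N - 1) choose (N div 2 - 1)) else 0))"
proof -
  have exists_iff: "OCA_exists N 2 m 2 2 \<longleftrightarrow> m \<le> (N - 1) choose (N div 2 - 1)" for N
    using OCA_2_2_le_choose OCA_2_2_exists assms unfolding OCA_exists_def by blast
  have le_iff: "m \<le> (N - 1) choose (N div 2 - 1) \<longleftrightarrow>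
      0 < N \<and> int m \<le> (if N div 2 \<ge> 1 then int ((N - 1) choose (N div 2 - 1)) else 0)" for N
    using two_le_half_if_le_choose[OF assms, of N] assms by auto
  show ?thesis unfolding OCAN_def exists_iff le_iff ..
qed

end
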